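(* Let $M$ be a matroid on a finite set $E$ with $r(M)>0$. For every $B\in\mathcal{B}(M)$, $\cup F_M(B)=\cup\mathcal{B}(M)$.
   Context: For a matroid $M$: $\mathcal{I}(M)$ its independent sets, $\mathcal{B}(M)$ its bases, $r(M)$ the size of a base, $r(X)$ the rank of $X\subseteq E$. For a set family $S$, $\cup S=\bigcup_{X\in S}X$. $s(M)=\{A\in\mathcal{I}(M): |A|=r(M)-1\}$; $K_M(X)=\{a\in E: r(X\cup\{a\})=r(X)+1\}$; $F_M(B)=\{K_M(X): X\in s(M),\ X\subseteq B\}$. *)

theory Defs
  imports Main
begin

definition matroid :: "'a set \<Rightarrow> 'a set set \<Rightarrow> bool" where
  "matroid E \<I> \<longleftrightarrow> finite E \<and> (\<forall>X\<in>\<I>. X \<subseteq> E) \<and> {} \<in> \<I> \<and>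
     (\<forall>X Y. X \<in> \<I> \<and> Y \<subseteq> X \<longrightarrow> Y \<in> \<I>) \<and>
     (\<forall>X Y. X \<in> \<I> \<and> Y \<in> \<I> \<and> card X < card Y \<longrightarrow> (\<exists>e\<in>Y - X. insert e X \<in> \<I>))"

definition bases :: "'a set set \<Rightarrow> 'a set set" where
  "bases \<I> = {B. B \<in> \<I> \<and> (\<forall>X\<in>\<I>. B \<subseteq> X \<longrightarrow> X = B)}"

definition rank_of :: "'a set set \<Rightarrow> 'a set \<Rightarrow> nat" where
  "rank_of \<I> X = Max (card ` {Y. Y \<in> \<I> \<and> Y \<subseteq> X})"

definition mrank :: "'a set \<Rightarrow> 'a set set \<Rightarrow> nat" where
  "mrank E \<I> = rank_of \<I> E"

definition s_sets :: "'a set \<Rightarrow> 'a set set \<Rightarrow> 'a set set" where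
  "s_sets E \<I> = {A. A \<in> \<I> \<and> card A = mrank E \<I> - 1}"

definition K_set :: "'a set \<Rightarrow> 'a set set \<Rightarrow> 'a set \<Rightarrow> 'a set" where
  "K_set E \<I> X = {a\<in>E. rank_of \<I> (insert a X) = rank_of \<I> X + 1}"

definition F_set :: "'a set \<Rightarrow> 'a set set \<Rightarrow> 'a set \<Rightarrow> 'a set set" where
  "F_set E \<I> B = {K_set E \<I> X | X. X \<in> s_sets E \<I> \<and> X \<subseteq> B}"

end

theory Submission
  imports Defs
begin

text \<open>For an independent X, the set K(X) consists of the a \<notin> X with X + a independent.
  Hence adding an element of K(X) to an independent (r-1)-set gives a basis. Conversely, an
  element x of some basis is independent on its own, so {x} extends from B to a basis
  Y \<subseteq> B + x; then Y - x is an independent (r-1)-subset of B whose K-set contains x.\<close>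

lemma matroid_indep_subset: "matroid E \<I> \<Longrightarrow> X \<in> \<I> \<Longrightarrow> X \<subseteq> E"
  unfolding matroid_def by blast

lemma matroid_indep_finite: "matroid E \<I> \<Longrightarrow> X \<in> \<I> \<Longrightarrow> finite X"
  unfolding matroid_def by (meson finite_subset)

lemma matroid_indep_subsetI: "matroid E \<I> \<Longrightarrow> X \<in> \<I> \<Longrightarrow> Y \<subseteq> X \<Longrightarrow> Y \<in> \<I>"
  unfolding matroid_def by blast

lemma matroid_augment:
  "matroid E \<I> \<Longrightarrow> X \<in> \<I> \<Longrightarrow> Y \<in> \<I> \<Longrightarrow> card X < card Y \<Longrightarrow> \<exists>e\<in>Y - X. insert e X \<in> \<I>"
  unfolding matroid_def by blast

lemma matroid_finite_indeps: "matroid E \<I> \<Longrightarrow> finite \<I>"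
  unfolding matroid_def by (meson Pow_iff finite_Pow_iff finite_subset subsetI)

lemma basis_indep: "B \<in> bases \<I> \<Longrightarrow> B \<in> \<I>"
  unfolding bases_def by simp

lemma rank_of_indep:
  assumes m: "matroid E \<I>" and X: "X \<in> \<I>"
  shows "rank_of \<I> X = card X"
  unfolding rank_of_def
proof (rule Max_eqI)
  show "finite (card ` {Y. Y \<in> \<I> \<and> Y \<subseteq> X})"
    using matroid_finite_indeps[OF m] by simp
  show "n \<le> card X" if "n \<in> card ` {Y. Y \<in> \<I> \<and> Y \<subseteq> X}" for n
    using that matroid_indep_finite[OF m X] card_mono by blast
  show "card X \<in> card ` {Y. Y \<in> \<I> \<and> Y \<subseteq> X}"
    using X by blast
qed

lemma card_indep_le_mrank:
  assumes m: "matroid E \<I>" and X: "X \<in> \<I>"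
  shows "card X \<le> mrank E \<I>"
  unfolding mrank_def rank_of_def
  using m X matroid_finite_indeps[OF m] matroid_indep_subset[OF m X] by (simp add: Max_ge)

lemma card_basis_eq_mrank:
  assumes m: "matroid E \<I>" and B: "B \<in> bases \<I>"
  shows "card B = mrank E \<I>"
proof -
  have BI: "B \<in> \<I>" and maximal: "\<forall>X\<in>\<I>. B \<subseteq> X \<longrightarrow> X = B"
    using B unfolding bases_def by auto
  have "{Y. Y \<in> \<I> \<and> Y \<subseteq> E} = \<I>"
    using matroid_indep_subset[OF m] by blast
  then obtain Y where Y: "Y \<in> \<I>" "card Y = mrank E \<I>"
    using Max_in[of "card ` \<I>"] matroid_finite_indeps[OF m] BI
    unfolding mrank_def rank_of_def by fastforce
  have "\<not> card B < card Y"
    using matroid_augment[OF m BI Y(1)] maximal by blast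
  then show ?thesis
    using card_indep_le_mrank[OF m BI] Y(2) by simp
qed

lemma basis_if_card_eq_mrank:
  assumes m: "matroid E \<I>" and Y: "Y \<in> \<I>" "card Y = mrank E \<I>"
  shows "Y \<in> bases \<I>"
  unfolding bases_def
proof (intro CollectI conjI ballI impI)
  fix X assume X: "X \<in> \<I>" "Y \<subseteq> X"
  then have "card X \<le> card Y"
    using card_indep_le_mrank[OF m] Y(2) by simp
  then show "X = Y"
    using card_subset_eq[OF matroid_indep_finite[OF m X(1)] X(2)] card_mono[OF _ X(2)]
      matroid_indep_finite[OF m X(1)] by simp
qed (use Y in simp)

lemma basis_extension:
  assumes m: "matroid E \<I>" and X: "X \<in> \<I>" and B: "B \<in> bases \<I>"
  obtains Y where "Y \<in> bases \<I>" "X \<subseteq> Y" "Y \<subseteq> X \<union> B"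
proof -
  define S where "S = {Y. Y \<in> \<I> \<and> X \<subseteq> Y \<and> Y \<subseteq> X \<union> B}"
  have "finite S"
    using matroid_finite_indeps[OF m] unfolding S_def by simp
  moreover have "X \<in> S"
    using X unfolding S_def by blast
  ultimately obtain Y where Y: "Y \<in> S" and largest: "\<And>Z. Z \<in> S \<Longrightarrow> card Z \<le> card Y"
    using Max_in[of "card ` S"] Max_ge[of "card ` S"] by (metis empty_iff finite_imageI image_iff)
  have YI: "Y \<in> \<I>" and BI: "B \<in> \<I>"
    using Y basis_indep[OF B] unfolding S_def by auto
  have "\<not> card Y < card B"
  proof
    assume "card Y < card B"
    then obtain e where e: "e \<in> B - Y" "insert e Y \<in> \<I>"
      using matroid_augment[OF m YI BI] by blast
    then have "insert e Y \<in> S"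
      using Y unfolding S_def by blast
    then show False
      using largest e matroid_indep_finite[OF m YI] by fastforce
  qed
  then have "card Y = mrank E \<I>"
    using card_indep_le_mrank[OF m YI] card_basis_eq_mrank[OF m B] by simp
  then show ?thesis
    using that basis_if_card_eq_mrank[OF m YI] Y unfolding S_def by blast
qed

lemma K_set_indep_iff:
  assumes m: "matroid E \<I>" and X: "X \<in> \<I>"
  shows "a \<in> K_set E \<I> X \<longleftrightarrow> a \<in> E \<and> a \<notin> X \<and> insert a X \<in> \<I>"
proof
  assume "a \<in> K_set E \<I> X"
  then have a: "a \<in> E" and rank: "rank_of \<I> (insert a X) = card X + 1"
    unfolding K_set_def using rank_of_indep[OF m X] by auto
  have fX: "finite X"
    using matroid_indep_finite[OF m X] .
  have "finite (card ` {Y. Y \<in> \<I> \<and> Y \<subseteq> insert a X})" "X \<in> {Y. Y \<in> \<I> \<and> Y \<subseteq> insert a X}"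
    using matroid_finite_indeps[OF m] X by auto
  then obtain Y where Y: "Y \<in> \<I>" "Y \<subseteq> insert a X" "card Y = card X + 1"
    using Max_in[of "card ` {Y. Y \<in> \<I> \<and> Y \<subseteq> insert a X}"] rank
    unfolding rank_of_def by fastforce
  have "a \<notin> X"
  proof
    assume "a \<in> X"
    then have "card Y \<le> card X"
      using Y(2) card_mono[OF fX] by (simp add: insert_absorb)
    then show False
      using Y(3) by simp
  qed
  moreover from this have "Y = insert a X"
    using Y fX card_subset_eq[of "insert a X" Y] by simp
  ultimately show "a \<in> E \<and> a \<notin> X \<and> insert a X \<in> \<I>"
    using a Y(1) by simp
next
  assume "a \<in> E \<and> a \<notin> X \<and> insert a X \<in> \<I>"
  then show "a \<in> K_set E \<I> X"
    unfolding K_set_def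
    using rank_of_indep[OF m] X matroid_indep_finite[OF m X] by simp
qed

lemma insert_K_set_basis:
  assumes m: "matroid E \<I>" and r: "mrank E \<I> > 0"
    and X: "X \<in> s_sets E \<I>" and x: "x \<in> K_set E \<I> X"
  shows "insert x X \<in> bases \<I>"
proof -
  have XI: "X \<in> \<I>" and cX: "card X = mrank E \<I> - 1"
    using X unfolding s_sets_def by auto
  then have "x \<notin> X" "insert x X \<in> \<I>"
    using K_set_indep_iff[OF m XI] x by auto
  then show ?thesis
    using basis_if_card_eq_mrank[OF m] cX r matroid_indep_finite[OF m XI] by simp
qed

lemma basis_remove_in_s_sets:
  assumes m: "matroid E \<I>" and Y: "Y \<in> bases \<I>" and x: "x \<in> Y"
  shows "Y - {x} \<in> s_sets E \<I>" and "x \<in> K_set E \<I> (Y - {x})"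
proof -
  have YI: "Y \<in> \<I>"
    using basis_indep[OF Y] .
  have XI: "Y - {x} \<in> \<I>"
    using matroid_indep_subsetI[OF m YI] by blast
  show "Y - {x} \<in> s_sets E \<I>"
    using XI x card_basis_eq_mrank[OF m Y] matroid_indep_finite[OF m YI]
    unfolding s_sets_def by simp
  show "x \<in> K_set E \<I> (Y - {x})"
    using K_set_indep_iff[OF m XI] matroid_indep_subset[OF m YI] YI x
    by (auto simp: insert_absorb)
qed

theorem proposition4:
  fixes E :: "'a set" and \<I> :: "'a set set" and B :: "'a set"
  assumes "matroid E \<I>"
    and "mrank E \<I> > 0"
    and "B \<in> bases \<I>"
  shows "\<Union> (F_set E \<I> B) = \<Union> (bases \<I>)"
proof
  note m = assms(1)
  show "\<Union> (F_set E \<I> B) \<subseteq> \<Union> (bases \<I>)"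
  proof
    fix x assume "x \<in> \<Union> (F_set E \<I> B)"
    then obtain X where "X \<in> s_sets E \<I>" "x \<in> K_set E \<I> X"
      unfolding F_set_def by blast
    then show "x \<in> \<Union> (bases \<I>)"
      using insert_K_set_basis[OF m assms(2)] by blast
  qed
  show "\<Union> (bases \<I>) \<subseteq> \<Union> (F_set E \<I> B)"
  proof
    fix x assume "x \<in> \<Union> (bases \<I>)"
    then obtain B' where "B' \<in> bases \<I>" "x \<in> B'"
      by blast
    then have "{x} \<in> \<I>"
      using matroid_indep_subsetI[OF m basis_indep] by simp
    then obtain Y where Y: "Y \<in> bases \<I>" "{x} \<subseteq> Y" "Y \<subseteq> {x} \<union> B"
      using basis_extension[OF m _ assms(3)] by blast
    then have "K_set E \<I> (Y - {x}) \<in> F_set E \<I> B"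
      using basis_remove_in_s_sets(1)[OF m Y(1)] unfolding F_set_def by blast
    then show "x \<in> \<Union> (F_set E \<I> B)"
      using basis_remove_in_s_sets(2)[OF m Y(1)] Y(2) by blast
  qed
qed

end
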